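(* Let $a\in[-1,1)$ and $\psi_a=\mathds{1}_{[a,1]}$ on $[-1,1]$ (i.e. $\psi_a(t)=0$ for $t\in[-1,a)$ and $\psi_a(t)=1$ for $t\in[a,1]$). Write $P_{\mathcal{A}_+}(\psi_a)=\sum_{n=0}^\infty c_nt^n$ with $c_n\ge0$, and let $S(a)=\{n\in\mathbb{N}: c_n>0\}$. Then $S(a)=\{0,1,2\}$ if and only if $0<a\le\frac{1}{\sqrt5}$. Moreover, for every $a\in(0,1/\sqrt5]$, \[ P_{\mathcal{A}_+}(\psi_a)=\frac18(4-9a+5a^3)+\frac34(1-a^2)t+\frac{15}{8}(a-a^3)t^2. \]
   Context: $\mathbb{N}=\{0,1,2,\dots\}$. $\mathcal{A}_+=\{\sum_{n=0}^\infty a_nt^n : a_n\ge0,\ \text{the series converges in }L^2([-1,1])\}$ (real $L^2$ for Lebesgue measure, convergence of partial sums); it is a closed convex cone, $P_{\mathcal{A}_+}$ denotes the metric projection onto it (the unique nearest point), and every element of $\mathcal{A}_+$ has a unique representation $\sum_n c_nt^n$ with $c_n\ge0$, so $S(a)$ is well defined. *)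

theory Defs
  imports "HOL-Analysis.Analysis"
begin

text \<open>Squared distance in real L^2([-1,1]) (Lebesgue measure), as an extended
  nonnegative real, so that it is meaningful for arbitrary measurable functions.\<close>
definition L2sq :: "(real \<Rightarrow> real) \<Rightarrow> (real \<Rightarrow> real) \<Rightarrow> ennreal" where
  "L2sq f g = (\<integral>\<^sup>+ t. indicator {-1..1} t * ennreal ((f t - g t)^2) \<partial>lborel)"

definition inL2 :: "(real \<Rightarrow> real) \<Rightarrow> bool" where
  "inL2 f \<longleftrightarrow> f \<in> borel_measurable lborel \<and> L2sq f (\<lambda>_. 0) < \<infinity>"

definition represents :: "(nat \<Rightarrow> real) \<Rightarrow> (real \<Rightarrow> real) \<Rightarrow> bool" where
  "represents c f \<longleftrightarrow> (\<forall>n. 0 \<le> c n) \<and> inL2 f \<and>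
     ((\<lambda>N. L2sq (\<lambda>t. \<Sum>n<N. c n * t ^ n) f) \<longlonglongrightarrow> 0)"

definition Aplus :: "(real \<Rightarrow> real) set" where
  "Aplus = {f. \<exists>c. represents c f}"

text \<open>P is the metric projection of h onto A_+ (a nearest point; unique up to a.e.).\<close>
definition is_proj_Aplus :: "(real \<Rightarrow> real) \<Rightarrow> (real \<Rightarrow> real) \<Rightarrow> bool" where
  "is_proj_Aplus h P \<longleftrightarrow> P \<in> Aplus \<and> (\<forall>g\<in>Aplus. L2sq h P \<le> L2sq h g)"

definition psi :: "real \<Rightarrow> real \<Rightarrow> real" where
  "psi a t = (if a \<le> t \<and> t \<le> 1 then 1 else 0)"

end

theory Submission
  imports Defs
begin

text \<open>
  In the Hilbert space L^2[-1,1], P is the metric projection of h onto the closed convex cone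
  A_+ spanned by the monomials t^k exactly when \<langle>h - P, t^k\<rangle> \<le> 0 for all k and
  \<langle>h - P, P\<rangle> = 0. Necessity: changing one coefficient of P by a small amount keeps it
  in A_+. Sufficiency: \<parallel>h - g\<parallel>^2 = \<parallel>h - P\<parallel>^2 + 2\<langle>h - P, P - g\<rangle> + \<parallel>P - g\<parallel>^2,
  and the middle term is nonnegative because g \<in> A_+ is the L^2-limit of its partial sums.

  For the quadratic Q_a of the statement, the moments \<langle>psi_a - Q_a, t^k\<rangle> vanish for
  k \<le> 2, equal (1 - a^2)(5a^2 - 1)/20 for k = 3 and are negative for k \<ge> 4 when 0 < a and
  a^2 \<le> 1/5; so Q_a is the projection. A representation c of the projection has c_k = 0
  for k \<ge> 4, since c_k > 0 would force the k-th moment to vanish, and a cubic is determined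
  by its first four moments, so c is the coefficient sequence of Q_a. Conversely, if c is
  supported on {0,1,2}, the moment equations for k \<le> 2 determine c, c_2 > 0 forces a > 0,
  and the inequality for k = 3 forces a^2 \<le> 1/5.
\<close>

section \<open>L2 inner product on [-1,1]\<close>

definition L2inner :: "(real \<Rightarrow> real) \<Rightarrow> (real \<Rightarrow> real) \<Rightarrow> real" where
  "L2inner u v = (\<integral>t. indicator {-1..1} t * (u t * v t) \<partial>lborel)"

definition L2dist2 :: "(real \<Rightarrow> real) \<Rightarrow> (real \<Rightarrow> real) \<Rightarrow> real" where
  "L2dist2 u v = L2inner (\<lambda>t. u t - v t) (\<lambda>t. u t - v t)"

lemma L2sq_altdef: "L2sq f g = (\<integral>\<^sup>+ t. ennreal (indicator {-1..1} t * (f t - g t)^2) \<partial>lborel)"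
  unfolding L2sq_def by (intro nn_integral_cong) (simp split: split_indicator)

lemma inL2_measurable [measurable_dest]: "inL2 f \<Longrightarrow> f \<in> borel_measurable borel"
  by (simp add: inL2_def)

lemma integrable_square_if_inL2:
  assumes "inL2 f"
  shows "integrable lborel (\<lambda>t. indicator {-1..1} t * (f t)^2)"
proof (rule integrableI_nonneg)
  show "(\<integral>\<^sup>+ t. ennreal (indicator {-1..1} t * (f t)\<^sup>2) \<partial>lborel) < \<infinity>"
    using assms unfolding inL2_def L2sq_altdef by simp
qed (use assms in auto)

lemma inL2_bounded:
  assumes "f \<in> borel_measurable borel" and "\<And>t. t \<in> {-1..1} \<Longrightarrow> \<bar>f t\<bar> \<le> B"
  shows "inL2 f"
proof -
  have "L2sq f (\<lambda>_. 0) \<le> (\<integral>\<^sup>+ t. ennreal (B^2) * indicator {-1..1} (t::real) \<partial>lborel)"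
    unfolding L2sq_def
  proof (rule nn_integral_mono)
    fix t :: real
    have "t \<in> {-1..1} \<Longrightarrow> (f t)^2 \<le> B^2"
      using assms(2)[of t] power_mono[of "\<bar>f t\<bar>" B 2] by simp
    then show "indicator {-1..1} t * ennreal ((f t - 0)\<^sup>2) \<le> ennreal (B\<^sup>2) * indicator {-1..1} t"
      by (cases "t \<in> {-1..1}") (simp_all add: ennreal_leI)
  qed
  also have "\<dots> = ennreal (B^2) * 2"
    by (subst nn_integral_cmult_indicator) simp_all
  also have "\<dots> < \<infinity>"
    by (simp add: ennreal_mult_less_top)
  finally show ?thesis
    using assms(1) unfolding inL2_def by simp
qed

lemma inL2_add:
  assumes f: "inL2 f" and g: "inL2 g"
  shows "inL2 (\<lambda>t. f t + g t)"
proof -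
  have "L2sq (\<lambda>t. f t + g t) (\<lambda>_. 0) \<le> (\<integral>\<^sup>+ t. 2 * ennreal (indicator {-1..1} t * (f t)^2)
      + 2 * ennreal (indicator {-1..1} t * (g t)^2) \<partial>lborel)"
    unfolding L2sq_altdef
  proof (rule nn_integral_mono)
    fix t
    have "(f t + g t)^2 \<le> 2 * (f t)^2 + 2 * (g t)^2"
      using zero_le_power2[of "f t - g t"] by (simp add: power2_sum power2_diff)
    then have "indicator {-1..1} t * (f t + g t - 0)^2
        \<le> 2 * (indicator {-1..1} t * (f t)^2) + 2 * (indicator {-1..1} t * (g t)^2)"
      by (simp split: split_indicator)
    then have "ennreal (indicator {-1..1} t * (f t + g t - 0)^2)
        \<le> ennreal (2 * (indicator {-1..1} t * (f t)^2) + 2 * (indicator {-1..1} t * (g t)^2))"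
      by (rule ennreal_leI)
    then show "ennreal (indicator {-1..1} t * (f t + g t - 0)^2)
        \<le> 2 * ennreal (indicator {-1..1} t * (f t)^2) + 2 * ennreal (indicator {-1..1} t * (g t)^2)"
      by (subst (asm) ennreal_plus) (auto simp: ennreal_mult)
  qed
  also have "\<dots> = 2 * L2sq f (\<lambda>_. 0) + 2 * L2sq g (\<lambda>_. 0)"
    unfolding L2sq_altdef using f g by (subst nn_integral_add) (auto simp: nn_integral_cmult)
  also have "\<dots> < \<infinity>"
    using f g unfolding inL2_def by (simp add: ennreal_mult_less_top)
  finally show ?thesis
    using f g unfolding inL2_def by (simp add: borel_measurable_add)
qed

lemma inL2_cmult:
  assumes "inL2 f"
  shows "inL2 (\<lambda>t. r * f t)"
proof -
  have "L2sq (\<lambda>t. r * f t) (\<lambda>_. 0)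
      = (\<integral>\<^sup>+ t. ennreal (r^2) * ennreal (indicator {-1..1} t * (f t)^2) \<partial>lborel)"
    unfolding L2sq_altdef
    by (intro nn_integral_cong) (simp add: ennreal_mult[symmetric] power_mult_distrib)
  also have "\<dots> = ennreal (r^2) * L2sq f (\<lambda>_. 0)"
    unfolding L2sq_altdef using assms by (subst nn_integral_cmult) auto
  also have "\<dots> < \<infinity>"
    using assms unfolding inL2_def by (simp add: ennreal_mult_less_top)
  finally show ?thesis
    using assms unfolding inL2_def by (simp add: borel_measurable_times)
qed

lemma inL2_diff: "inL2 f \<Longrightarrow> inL2 g \<Longrightarrow> inL2 (\<lambda>t. f t - g t)"
  using inL2_add[of f "\<lambda>t. (-1) * g t"] inL2_cmult[of g "-1"] by simp

lemma inL2_sum: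
  "finite A \<Longrightarrow> (\<And>j. j \<in> A \<Longrightarrow> inL2 (f j)) \<Longrightarrow> inL2 (\<lambda>t. \<Sum>j\<in>A. f j t)"
proof (induction A rule: finite_induct)
  case empty
  then show ?case by (intro inL2_bounded[where B=0]) auto
next
  case (insert x F)
  then show ?case using inL2_add[of "f x" "\<lambda>t. \<Sum>j\<in>F. f j t"] by simp
qed

lemma integrable_L2inner:
  assumes "inL2 u" and "inL2 v"
  shows "integrable lborel (\<lambda>t. indicator {-1..1} t * (u t * v t))"
proof (rule Bochner_Integration.integrable_bound)
  show "integrable lborel (\<lambda>t. indicator {-1..1} t * (u t)^2 + indicator {-1..1} t * (v t)^2)"
    using integrable_square_if_inL2[OF assms(1)] integrable_square_if_inL2[OF assms(2)] by simp
  show "AE t in lborel. norm (indicator {-1..1} t * (u t * v t))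
      \<le> norm (indicator {-1..1} t * (u t)^2 + indicator {-1..1} t * (v t)^2)"
  proof (intro AE_I2)
    fix t
    have "\<bar>u t * v t\<bar> \<le> (u t)^2 + (v t)^2"
      using sum_squares_bound[of "\<bar>u t\<bar>" "\<bar>v t\<bar>"] abs_ge_zero[of "u t * v t"]
      unfolding abs_mult power2_abs by linarith
    then show "norm (indicator {-1..1} t * (u t * v t))
        \<le> norm (indicator {-1..1} t * (u t)^2 + indicator {-1..1} t * (v t)^2)"
      by (simp split: split_indicator)
  qed
qed (use assms in auto)

lemma L2inner_commute: "L2inner u v = L2inner v u"
  unfolding L2inner_def by (simp add: mult.commute)

lemma L2inner_add_left:
  assumes "inL2 u" "inL2 v" "inL2 w"
  shows "L2inner (\<lambda>t. u t + v t) w = L2inner u w + L2inner v w"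
  unfolding L2inner_def distrib_right distrib_left
  using integrable_L2inner assms by (simp add: Bochner_Integration.integral_add)

lemma L2inner_diff_left:
  assumes "inL2 u" "inL2 v" "inL2 w"
  shows "L2inner (\<lambda>t. u t - v t) w = L2inner u w - L2inner v w"
  unfolding L2inner_def left_diff_distrib right_diff_distrib
  using integrable_L2inner assms by (simp add: Bochner_Integration.integral_diff)

lemma L2inner_cmult_left: "L2inner (\<lambda>t. r * u t) w = r * L2inner u w"
  unfolding L2inner_def by (simp add: ac_simps)

lemma L2inner_diff_right:
  "inL2 u \<Longrightarrow> inL2 v \<Longrightarrow> inL2 w \<Longrightarrow> L2inner w (\<lambda>t. u t - v t) = L2inner w u - L2inner w v"
  using L2inner_diff_left[of u v w] by (simp add: L2inner_commute)

lemma L2inner_cmult_right: "L2inner w (\<lambda>t. r * u t) = r * L2inner w u"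
  using L2inner_cmult_left[of r u w] by (simp add: L2inner_commute)

lemma L2inner_sum_left:
  "finite A \<Longrightarrow> (\<And>j. j \<in> A \<Longrightarrow> inL2 (f j)) \<Longrightarrow> inL2 w \<Longrightarrow>
     L2inner (\<lambda>t. \<Sum>j\<in>A. f j t) w = (\<Sum>j\<in>A. L2inner (f j) w)"
proof (induction A rule: finite_induct)
  case empty
  then show ?case by (simp add: L2inner_def)
next
  case (insert x F)
  then show ?case
    using L2inner_add_left[of "f x" "\<lambda>t. \<Sum>j\<in>F. f j t" w] inL2_sum[of F f] by simp
qed

lemma L2inner_self_nonneg: "0 \<le> L2inner u u"
  unfolding L2inner_def by (rule integral_nonneg_AE) (simp split: split_indicator)

lemma L2dist2_nonneg: "0 \<le> L2dist2 u v"
  unfolding L2dist2_def by (rule L2inner_self_nonneg)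

lemma L2sq_eq_L2dist2:
  assumes "inL2 u" "inL2 v"
  shows "L2sq u v = ennreal (L2dist2 u v)"
  unfolding L2sq_altdef L2dist2_def L2inner_def
  using integrable_square_if_inL2[OF inL2_diff[OF assms]]
  by (subst nn_integral_eq_integral) (auto simp: power2_eq_square)

lemma L2inner_eq_0_if_self_eq_0:
  assumes "inL2 u" "inL2 w" and "L2inner u u = 0"
  shows "L2inner u w = 0"
proof -
  have "AE t in lborel. indicator {-1..1} t * (u t * u t) = 0"
    using assms integrable_L2inner[OF assms(1,1)]
    by (subst integral_nonneg_eq_0_iff_AE[symmetric]) (auto simp: L2inner_def split: split_indicator)
  then have "AE t in lborel. indicator {-1..1} t * (u t * w t) = 0"
    by eventually_elim (auto split: split_indicator)
  then show ?thesis
    unfolding L2inner_def by (simp add: integral_eq_zero_AE)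
qed

lemma L2inner_Cauchy_Schwarz:
  assumes "inL2 u" "inL2 v"
  shows "(L2inner u v)^2 \<le> L2inner u u * L2inner v v"
proof (cases "L2inner v v = 0")
  case True
  then show ?thesis
    using L2inner_eq_0_if_self_eq_0[OF assms(2,1)] by (simp add: L2inner_commute)
next
  case False
  then have B: "0 < L2inner v v" using L2inner_self_nonneg[of v] by simp
  define r where "r = L2inner u v / L2inner v v"
  have rv: "inL2 (\<lambda>t. r * v t)" using assms(2) by (rule inL2_cmult)
  have "0 \<le> L2inner (\<lambda>t. u t - r * v t) (\<lambda>t. u t - r * v t)"
    by (rule L2inner_self_nonneg)
  also have "\<dots> = L2inner u u - 2 * r * L2inner u v + r^2 * L2inner v v"
    using assms rv L2inner_commute[of v u]
    by (simp add: L2inner_diff_left L2inner_diff_right inL2_diff L2inner_cmult_left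
        L2inner_cmult_right power2_eq_square algebra_simps)
  also have "\<dots> = L2inner u u - (L2inner u v)^2 / L2inner v v"
    using B unfolding r_def by (simp add: power2_eq_square field_simps)
  finally show ?thesis using B by (simp add: field_simps)
qed

lemma L2dist2_eq_0_imp_L2inner_eq:
  assumes "inL2 u" "inL2 v" "inL2 w" and "L2dist2 u v = 0"
  shows "L2inner u w = L2inner v w"
  using L2inner_eq_0_if_self_eq_0[OF inL2_diff[OF assms(1,2)] assms(3)] assms
  unfolding L2dist2_def by (simp add: L2inner_diff_left)

lemma L2dist2_expand:
  assumes "inL2 h" "inL2 q" "inL2 g"
  shows "L2dist2 h g = L2dist2 h q + 2 * L2inner (\<lambda>t. h t - q t) (\<lambda>t. q t - g t) + L2dist2 q g"
proof -
  define D where "D t = h t - q t" for t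
  define V where "V t = q t - g t" for t
  have D: "inL2 D" and V: "inL2 V"
    unfolding D_def V_def using assms by (auto intro: inL2_diff)
  have "(\<lambda>t. h t - g t) = (\<lambda>t. D t + V t)"
    unfolding D_def V_def by auto
  then have "L2dist2 h g = L2inner (\<lambda>t. D t + V t) (\<lambda>t. D t + V t)"
    unfolding L2dist2_def by simp
  also have "\<dots> = L2inner D (\<lambda>t. D t + V t) + L2inner V (\<lambda>t. D t + V t)"
    using D V inL2_add[OF D V] by (rule L2inner_add_left)
  also have "\<dots> = L2inner D D + 2 * L2inner D V + L2inner V V"
    using L2inner_add_left[OF D V D] L2inner_add_left[OF D V V]
    by (simp add: L2inner_commute[of _ "\<lambda>t. D t + V t"] L2inner_commute[of V D])
  finally show ?thesis
    unfolding L2dist2_def D_def V_def .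
qed

section \<open>Partial sums of power series\<close>

definition psum :: "(nat \<Rightarrow> real) \<Rightarrow> nat \<Rightarrow> real \<Rightarrow> real" where
  "psum c N t = (\<Sum>n<N. c n * t ^ n)"

definition moment :: "nat \<Rightarrow> real" where
  "moment k = (1 - (-1) ^ Suc k) / Suc k"

lemma moment_eq: "moment k = (if even k then 2 / (k + 1) else 0)"
  unfolding moment_def by auto

lemma sum_lessThan_3: "(\<Sum>j<(3::nat). f j) = f 0 + f 1 + (f 2 :: real)"
  by (simp add: numeral_3_eq_3 numeral_2_eq_2)

lemma sum_lessThan_4: "(\<Sum>j<(4::nat). f j) = f 0 + f 1 + f 2 + (f 3 :: real)"
  by (simp add: numeral_eq_Suc)

lemma inL2_power: "inL2 (\<lambda>t. t ^ n)"
  by (rule inL2_bounded[where B=1]) (auto simp: power_abs intro: power_le_one)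

lemma inL2_psum: "inL2 (psum c N)"
  unfolding psum_def[abs_def] by (intro inL2_sum inL2_cmult inL2_power) simp

lemma L2inner_power_power: "L2inner (\<lambda>t. t ^ m) (\<lambda>t. t ^ n) = moment (m + n)"
proof -
  have "L2inner (\<lambda>t. t ^ m) (\<lambda>t. t ^ n) = (\<integral>t. t ^ (m + n) * indicator {-1..1} t \<partial>lborel)"
    unfolding L2inner_def by (simp add: power_add mult.commute)
  also have "\<dots> = moment (m + n)"
    by (subst integral_power) (auto simp: moment_def)
  finally show ?thesis .
qed

lemma L2inner_psum_left:
  assumes "inL2 w"
  shows "L2inner (psum c N) w = (\<Sum>j<N. c j * L2inner (\<lambda>t. t ^ j) w)"
  unfolding psum_def[abs_def] using assms
  by (subst L2inner_sum_left) (auto intro: inL2_cmult inL2_power simp: L2inner_cmult_left)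

lemma L2inner_psum_power: "L2inner (psum c N) (\<lambda>t. t ^ k) = (\<Sum>j<N. c j * moment (j + k))"
  by (simp add: L2inner_psum_left inL2_power L2inner_power_power)

lemma cubic_coeffs_eq_if_moments_eq:
  assumes "\<And>k. k < 4 \<Longrightarrow> (\<Sum>j<4. c j * moment (j + k)) = (\<Sum>j<4. d j * moment (j + k))"
    and "j < 4"
  shows "c j = d j"
proof -
  have "2 * c 0 + 2/3 * c 2 = 2 * d 0 + 2/3 * d 2"
    "2/3 * c 1 + 2/5 * c 3 = 2/3 * d 1 + 2/5 * d 3"
    "2/3 * c 0 + 2/5 * c 2 = 2/3 * d 0 + 2/5 * d 2"
    "2/5 * c 1 + 2/7 * c 3 = 2/5 * d 1 + 2/7 * d 3"
    using assms(1)[of 0] assms(1)[of 1] assms(1)[of 2] assms(1)[of 3]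
    by (simp_all add: sum_lessThan_4 moment_def)
  then have "c 0 = d 0" "c 1 = d 1" "c 2 = d 2" "c 3 = d 3"
    by linarith+
  then show ?thesis
    using assms(2) by (auto simp: less_Suc_eq numeral_eq_Suc)
qed

lemma psum_eq_if_vanishing:
  assumes "\<forall>n\<ge>M. c n = 0" and "M \<le> N"
  shows "psum c N = psum c M"
  using assms(2)
proof (induction N rule: dec_induct)
  case (step N)
  then show ?case using assms(1) unfolding psum_def by (auto simp: fun_eq_iff)
qed simp

lemma represents_altdef:
  "represents c f \<longleftrightarrow> (\<forall>n. 0 \<le> c n) \<and> inL2 f \<and> (\<lambda>N. L2sq (psum c N) f) \<longlonglongrightarrow> 0"
  by (simp add: represents_def psum_def[abs_def])

lemma represents_imp_inL2: "represents c P \<Longrightarrow> inL2 P"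
  by (simp add: represents_def)

lemma represents_nonneg: "represents c P \<Longrightarrow> 0 \<le> c n"
  by (simp add: represents_def)

lemma represents_L2dist2_tendsto:
  assumes "represents c P"
  shows "(\<lambda>N. L2dist2 (psum c N) P) \<longlonglongrightarrow> 0"
proof -
  have "(\<lambda>N. ennreal (L2dist2 (psum c N) P)) \<longlonglongrightarrow> ennreal 0"
    using assms represents_imp_inL2[OF assms]
    by (simp add: represents_altdef L2sq_eq_L2dist2[OF inL2_psum])
  then show ?thesis
    using L2dist2_nonneg by (subst (asm) tendsto_ennreal_iff) auto
qed

lemma represents_psum:
  assumes "\<forall>n. 0 \<le> c n" and "\<forall>n\<ge>M. c n = 0"
  shows "represents c (psum c M)"
proof -
  have "\<forall>\<^sub>F N in sequentially. L2sq (psum c N) (psum c M) = 0"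
    using eventually_ge_at_top[of M]
    by eventually_elim (subst psum_eq_if_vanishing[OF assms(2)], simp_all add: L2sq_def)
  then have "(\<lambda>N. L2sq (psum c N) (psum c M)) \<longlonglongrightarrow> 0"
    by (rule tendsto_eventually)
  then show ?thesis
    using assms(1) inL2_psum by (simp add: represents_altdef)
qed

lemma represents_L2dist2_eq_0:
  assumes "represents c P" and "\<forall>n\<ge>M. c n = 0"
  shows "L2dist2 (psum c M) P = 0"
proof -
  have "\<forall>\<^sub>F N in sequentially. L2dist2 (psum c N) P = L2dist2 (psum c M) P"
    using eventually_ge_at_top[of M]
    by eventually_elim (subst psum_eq_if_vanishing[OF assms(2)], simp_all)
  then have "(\<lambda>N. L2dist2 (psum c M) P) \<longlonglongrightarrow> 0"
    using represents_L2dist2_tendsto[OF assms(1)] tendsto_cong by fastforce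
  then show ?thesis
    by (simp add: LIMSEQ_const_iff)
qed

lemma represents_L2inner_power_if_vanishing:
  assumes "represents c P" and "\<forall>n\<ge>M. c n = 0"
  shows "L2inner P (\<lambda>t. t ^ k) = (\<Sum>j<M. c j * moment (j + k))"
proof -
  have "L2inner P (\<lambda>t. t ^ k) = L2inner (psum c M) (\<lambda>t. t ^ k)"
    using L2dist2_eq_0_imp_L2inner_eq[OF inL2_psum represents_imp_inL2[OF assms(1)] inL2_power
        represents_L2dist2_eq_0[OF assms]] ..
  then show ?thesis
    by (simp add: L2inner_psum_power)
qed

lemma represents_add_monomial:
  assumes "represents c P" and "0 \<le> c k + e"
  shows "represents (c(k := c k + e)) (\<lambda>t. P t + e * t ^ k)"
proof -
  have psum_upd: "psum (c(k := c k + e)) N t = psum c N t + e * t ^ k" if "k < N" for N t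
    using that by (simp add: psum_def sum.remove[of "{..<N}" k] algebra_simps)
  have "\<forall>\<^sub>F N in sequentially. L2sq (psum (c(k := c k + e)) N) (\<lambda>t. P t + e * t ^ k)
      = L2sq (psum c N) P"
    using eventually_gt_at_top[of k] by eventually_elim (simp add: L2sq_def psum_upd)
  moreover have "(\<lambda>N. L2sq (psum c N) P) \<longlonglongrightarrow> 0"
    using assms(1) by (simp add: represents_altdef)
  ultimately have "(\<lambda>N. L2sq (psum (c(k := c k + e)) N) (\<lambda>t. P t + e * t ^ k)) \<longlonglongrightarrow> 0"
    using tendsto_cong by fastforce
  moreover have "inL2 (\<lambda>t. P t + e * t ^ k)"
    using represents_imp_inL2[OF assms(1)] by (intro inL2_add inL2_cmult inL2_power)
  moreover have "\<forall>n. 0 \<le> (c(k := c k + e)) n"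
    using assms represents_nonneg[OF assms(1)] by simp
  ultimately show ?thesis
    unfolding represents_altdef by blast
qed

lemma L2inner_psum_tendsto:
  assumes "inL2 w" and "represents c g"
  shows "(\<lambda>N. L2inner w (psum c N)) \<longlonglongrightarrow> L2inner w g"
proof -
  have g: "inL2 g" using assms(2) by (rule represents_imp_inL2)
  have "(\<lambda>N. L2inner w (\<lambda>t. psum c N t - g t)) \<longlonglongrightarrow> 0"
  proof (rule Lim_null_comparison)
    show "(\<lambda>N. sqrt (L2inner w w * L2dist2 (psum c N) g)) \<longlonglongrightarrow> 0"
      using tendsto_real_sqrt[OF tendsto_mult_left[OF represents_L2dist2_tendsto[OF assms(2)]]]
      by simp
    show "\<forall>\<^sub>F N in sequentially. norm (L2inner w (\<lambda>t. psum c N t - g t))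
        \<le> sqrt (L2inner w w * L2dist2 (psum c N) g)"
    proof (intro always_eventually allI)
      fix N
      have "(L2inner w (\<lambda>t. psum c N t - g t))^2 \<le> L2inner w w * L2dist2 (psum c N) g"
        unfolding L2dist2_def using assms(1) inL2_diff[OF inL2_psum g]
        by (rule L2inner_Cauchy_Schwarz)
      then show "norm (L2inner w (\<lambda>t. psum c N t - g t)) \<le> sqrt (L2inner w w * L2dist2 (psum c N) g)"
        by (metis real_norm_def real_sqrt_abs real_sqrt_le_mono)
    qed
  qed
  then have "(\<lambda>N. L2inner w g + L2inner w (\<lambda>t. psum c N t - g t)) \<longlonglongrightarrow> L2inner w g + 0"
    by (intro tendsto_add tendsto_const)
  then show ?thesis
    using assms(1) g by (simp add: L2inner_diff_right inL2_psum)
qed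

lemma L2inner_nonpos_if_represents:
  assumes "inL2 w" and "\<And>k. L2inner w (\<lambda>t. t ^ k) \<le> 0" and "represents c g"
  shows "L2inner w g \<le> 0"
proof (rule tendsto_upperbound[OF L2inner_psum_tendsto[OF assms(1,3)]])
  show "\<forall>\<^sub>F N in sequentially. L2inner w (psum c N) \<le> 0"
  proof (intro always_eventually allI)
    fix N
    have "L2inner w (psum c N) = (\<Sum>j<N. c j * L2inner w (\<lambda>t. t ^ j))"
      using assms(1) by (simp add: L2inner_commute[of w] L2inner_psum_left)
    also have "\<dots> \<le> 0"
      using assms(2) represents_nonneg[OF assms(3)] by (intro sum_nonpos mult_nonneg_nonpos)
    finally show "L2inner w (psum c N) \<le> 0" .
  qed
qed simp

section \<open>Metric projection onto the cone\<close>

lemma L2dist2_le_if_L2sq_le: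
  assumes "inL2 h" "inL2 u" "inL2 v" and "L2sq h u \<le> L2sq h v"
  shows "L2dist2 h u \<le> L2dist2 h v"
  using assms by (simp add: L2sq_eq_L2dist2 L2dist2_nonneg)

lemma nonpos_if_quadratic_bound_near_0:
  fixes X M \<delta> :: real
  assumes "0 < \<delta>" and "\<And>s. 0 < s \<Longrightarrow> s < \<delta> \<Longrightarrow> 2 * s * X \<le> s^2 * M"
  shows "X \<le> 0"
proof (rule tendsto_lowerbound)
  show "((\<lambda>s. s * M / 2) \<longlongrightarrow> 0) (at_right 0)"
    by (auto intro!: tendsto_eq_intros)
  have "\<forall>\<^sub>F s in at_right 0. 0 < s \<and> s < \<delta>"
    using assms(1) by (auto simp: eventually_at_right_field)
  then show "\<forall>\<^sub>F s in at_right 0. X \<le> s * M / 2"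
  proof eventually_elim
    case (elim s)
    then have "s * (2 * X) \<le> s * (s * M)"
      using assms(2)[of s] by (simp add: power2_eq_square ac_simps)
    then show ?case using elim by simp
  qed
qed simp

lemma proj_Aplus_perturb_monomial:
  assumes h: "inL2 h" and proj: "is_proj_Aplus h P" and rep: "represents c P"
    and e: "0 \<le> c k + e"
  shows "2 * e * L2inner (\<lambda>t. h t - P t) (\<lambda>t. t ^ k) \<le> e^2 * moment (2 * k)"
proof -
  define g where "g t = P t + e * t ^ k" for t
  have P: "inL2 P" using rep by (rule represents_imp_inL2)
  have g: "inL2 g" unfolding g_def by (intro inL2_add P inL2_cmult inL2_power)
  have "g \<in> Aplus"
    unfolding Aplus_def g_def using represents_add_monomial[OF rep e] by blast
  then have "L2dist2 h P \<le> L2dist2 h g"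
    using proj h P g by (intro L2dist2_le_if_L2sq_le) (auto simp: is_proj_Aplus_def)
  also have "\<dots> = L2dist2 h P + 2 * L2inner (\<lambda>t. h t - P t) (\<lambda>t. (-e) * t ^ k)
      + L2inner (\<lambda>t. (-e) * t ^ k) (\<lambda>t. (-e) * t ^ k)"
    unfolding L2dist2_expand[OF h P g] by (simp add: g_def L2dist2_def)
  also have "\<dots> = L2dist2 h P - 2 * e * L2inner (\<lambda>t. h t - P t) (\<lambda>t. t ^ k) + e^2 * moment (2 * k)"
    unfolding L2inner_cmult_left L2inner_cmult_right L2inner_power_power mult_2[of k, symmetric]
    by (simp add: power2_eq_square)
  finally show ?thesis by simp
qed

lemma proj_Aplus_L2inner_power_nonpos:
  assumes "inL2 h" "is_proj_Aplus h P" "represents c P"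
  shows "L2inner (\<lambda>t. h t - P t) (\<lambda>t. t ^ k) \<le> 0"
proof (rule nonpos_if_quadratic_bound_near_0)
  fix s :: real assume "0 < s"
  then show "2 * s * L2inner (\<lambda>t. h t - P t) (\<lambda>t. t ^ k) \<le> s^2 * moment (2 * k)"
    using assms represents_nonneg[OF assms(3), of k] by (intro proj_Aplus_perturb_monomial) auto
qed (rule zero_less_one)

lemma proj_Aplus_L2inner_power_eq_0:
  assumes "inL2 h" "is_proj_Aplus h P" "represents c P" and "0 < c k"
  shows "L2inner (\<lambda>t. h t - P t) (\<lambda>t. t ^ k) = 0"
proof -
  have "- L2inner (\<lambda>t. h t - P t) (\<lambda>t. t ^ k) \<le> 0"
  proof (rule nonpos_if_quadratic_bound_near_0)
    fix s :: real assume "0 < s" "s < c k"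
    then show "2 * s * - L2inner (\<lambda>t. h t - P t) (\<lambda>t. t ^ k) \<le> s^2 * moment (2 * k)"
      using proj_Aplus_perturb_monomial[OF assms(1-3), of k "-s"] by simp
  qed (rule assms(4))
  then show ?thesis
    using proj_Aplus_L2inner_power_nonpos[OF assms(1-3), of k] by simp
qed

lemma L2dist2_add_le_if_variational:
  assumes h: "inL2 h" and q: "inL2 q"
    and var_le: "\<And>k. L2inner (\<lambda>t. h t - q t) (\<lambda>t. t ^ k) \<le> 0"
    and var_eq: "L2inner (\<lambda>t. h t - q t) q = 0"
    and rep: "represents c g"
  shows "L2dist2 h q + L2dist2 q g \<le> L2dist2 h g"
proof -
  have g: "inL2 g" using rep by (rule represents_imp_inL2)
  have hq: "inL2 (\<lambda>t. h t - q t)" using h q by (rule inL2_diff)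
  have "L2inner (\<lambda>t. h t - q t) (\<lambda>t. q t - g t) = - L2inner (\<lambda>t. h t - q t) g"
    using var_eq by (simp add: L2inner_diff_right[OF q g hq])
  also have "\<dots> \<ge> 0"
    using L2inner_nonpos_if_represents[OF hq var_le rep] by simp
  finally show ?thesis
    using L2dist2_expand[OF h q g] by simp
qed

lemma is_proj_Aplus_if_variational:
  assumes "inL2 h" "represents d q"
    and "\<And>k. L2inner (\<lambda>t. h t - q t) (\<lambda>t. t ^ k) \<le> 0"
    and "L2inner (\<lambda>t. h t - q t) q = 0"
  shows "is_proj_Aplus h q"
  unfolding is_proj_Aplus_def Aplus_def
proof (intro conjI ballI)
  fix g assume "g \<in> {f. \<exists>c. represents c f}"
  then obtain c where rep: "represents c g" by blast
  have q: "inL2 q" using assms(2) by (rule represents_imp_inL2)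
  have "L2dist2 h q \<le> L2dist2 h g"
    using L2dist2_add_le_if_variational[OF assms(1) q assms(3,4) rep] L2dist2_nonneg[of q g]
    by simp
  then show "L2sq h q \<le> L2sq h g"
    using assms(1) q represents_imp_inL2[OF rep] by (simp add: L2sq_eq_L2dist2 ennreal_leI)
qed (use assms(2) in blast)

lemma proj_Aplus_unique_if_variational:
  assumes "inL2 h" "represents d q"
    and "\<And>k. L2inner (\<lambda>t. h t - q t) (\<lambda>t. t ^ k) \<le> 0"
    and "L2inner (\<lambda>t. h t - q t) q = 0"
    and "is_proj_Aplus h P" "represents c P"
  shows "L2dist2 q P = 0"
proof -
  have q: "inL2 q" and P: "inL2 P"
    using assms(2,6) by (auto intro: represents_imp_inL2)
  have "q \<in> Aplus" using assms(2) unfolding Aplus_def by blast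
  then have "L2dist2 h P \<le> L2dist2 h q"
    using assms(1,5) q P by (intro L2dist2_le_if_L2sq_le) (auto simp: is_proj_Aplus_def)
  then show ?thesis
    using L2dist2_add_le_if_variational[OF assms(1) q assms(3,4,6)] L2dist2_nonneg[of q P] by simp
qed

section \<open>Projection of the indicator function\<close>

lemma inL2_psi: "inL2 (psi a)"
  unfolding psi_def by (rule inL2_bounded[where B=1]) auto

lemma L2inner_psi_power:
  assumes "-1 \<le> a" "a \<le> 1"
  shows "L2inner (psi a) (\<lambda>t. t ^ n) = (1 - a ^ Suc n) / Suc n"
proof -
  have "L2inner (psi a) (\<lambda>t. t ^ n) = (\<integral>t. t ^ n * indicator {a..1} t \<partial>lborel)"
    unfolding L2inner_def psi_def using assms
    by (intro Bochner_Integration.integral_cong) (auto split: split_indicator)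
  also have "\<dots> = (1 - a ^ Suc n) / Suc n"
    using assms by (subst integral_power) auto
  finally show ?thesis .
qed

lemma L2inner_psi_minus_represents_power:
  assumes "-1 \<le> a" "a \<le> 1" and "represents c P" and "\<forall>n\<ge>M. c n = 0"
  shows "L2inner (\<lambda>t. psi a t - P t) (\<lambda>t. t ^ k)
    = (1 - a ^ Suc k) / Suc k - (\<Sum>j<M. c j * moment (j + k))"
  using assms
  by (simp add: L2inner_diff_left inL2_psi represents_imp_inL2 inL2_power
      L2inner_psi_power represents_L2inner_power_if_vanishing)

definition qcoef :: "real \<Rightarrow> nat \<Rightarrow> real" where
  "qcoef a n = (if n = 0 then (4 - 9*a + 5*a^3) / 8 else if n = 1 then 3/4 * (1 - a^2)
     else if n = 2 then 15/8 * (a - a^3) else 0)"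

(* The k-th moment of psi a - psum (qcoef a) 3. *)
definition residual_moment :: "real \<Rightarrow> nat \<Rightarrow> real" where
  "residual_moment a k = (1 - a ^ Suc k) / Suc k - (\<Sum>j<3. qcoef a j * moment (j + k))"

lemma psum_qcoef:
  "psum (qcoef a) 3 = (\<lambda>t. (4 - 9*a + 5*a^3) / 8 + 3/4 * (1 - a^2) * t + 15/8 * (a - a^3) * t^2)"
  by (simp add: fun_eq_iff psum_def sum_lessThan_3 qcoef_def)

lemma qcoef_vanishing: "\<forall>n\<ge>3. qcoef a n = 0"
  by (simp add: qcoef_def)

lemma le_inverse_sqrt_5_iff:
  fixes a :: real
  assumes "0 < a"
  shows "a \<le> 1 / sqrt 5 \<longleftrightarrow> a^2 \<le> 1/5"
proof -
  have "1 / sqrt 5 = sqrt (1/5)"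
    by (simp add: real_sqrt_divide)
  then show ?thesis
    using assms real_le_rsqrt real_sqrt_le_iff[of "a^2" "1/5"] by auto
qed

lemma qcoef_pos:
  assumes "0 < a" and a2: "a^2 \<le> 1/5" and "n < 3"
  shows "0 < qcoef a n"
proof -
  have "a < 1/2"
  proof (rule ccontr)
    assume "\<not> a < 1/2"
    then have "(1/2)^2 \<le> a^2" by (intro power_mono) auto
    with a2 show False by (simp add: power2_eq_square)
  qed
  have "a^3 < a"
    using assms(1) a2 by (simp add: power3_eq_cube power2_eq_square)
  moreover have "0 < (1 - a) * (4 - 5 * a - 5 * a^2)"
    using \<open>a < 1/2\<close> a2 by (intro mult_pos_pos) auto
  moreover have "(1 - a) * (4 - 5 * a - 5 * a^2) = 4 - 9*a + 5*a^3"
    by (simp add: algebra_simps power2_eq_square power3_eq_cube)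
  ultimately show ?thesis
    using a2 assms(3) unfolding qcoef_def by (auto simp: less_Suc_eq numeral_3_eq_3)
qed

lemma residual_moment_eq_0:
  assumes "k < 3"
  shows "residual_moment a k = 0"
proof -
  have "k = 0 \<or> k = 1 \<or> k = 2" using assms by auto
  then show ?thesis
    by (elim disjE) (simp_all add: residual_moment_def sum_lessThan_3 qcoef_def moment_def
        field_simps power2_eq_square power3_eq_cube)
qed

lemma residual_moment_3: "residual_moment a 3 = (1 - a^2) * (5 * a^2 - 1) / 20"
  by (simp add: residual_moment_def sum_lessThan_3 qcoef_def moment_def
      field_simps power2_eq_square power3_eq_cube numeral_eq_Suc)

lemma diff_divide_neg:
  fixes U V y z :: real
  assumes "0 < y" "0 < z" and "U * z < V * y"
  shows "U / y - V / z < 0"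
  using assms by (simp add: field_simps)

lemma residual_moment_neg_even:
  assumes a: "0 < a" "a^2 \<le> 1/5" and k: "4 \<le> k" "even k"
  shows "residual_moment a k < 0"
proof -
  have m: "moment k = 2 / (real k + 1)" "moment (Suc k) = 0" "moment (Suc (Suc k)) = 2 / (real k + 3)"
    using k(2) by (simp_all add: moment_eq)
  define U where "U = 1 - a ^ Suc k - 2 * qcoef a 0"
  define V where "V = 2 * qcoef a 2"
  have "residual_moment a k = U / (real k + 1) - V / (real k + 3)"
    unfolding residual_moment_def sum_lessThan_3 U_def V_def
    by (simp add: m diff_divide_distrib add.commute mult.commute[of 2])
  also have "\<dots> < 0"
  proof (rule diff_divide_neg)
    have "10 * a^2 * real k \<le> 2 * real k"
      using mult_right_mono[OF a(2), of k] by (simp add: ac_simps)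
    moreover have "4 \<le> real k" using k by simp
    ultimately have "0 < 6 * real k - 12 - 10 * a^2 * real k" by linarith
    then have "0 < a * (6 * real k - 12 - 10 * a^2 * real k) / 4"
      using a(1) by simp
    also have "\<dots> = V * (real k + 1) - (9 * a - 5 * a^3) / 4 * (real k + 3)"
      by (simp add: V_def qcoef_def field_simps power2_eq_square power3_eq_cube)
    finally have "(9 * a - 5 * a^3) / 4 * (real k + 3) < V * (real k + 1)" by simp
    moreover have "U = (9 * a - 5 * a^3) / 4 - a ^ Suc k"
      by (simp add: U_def qcoef_def field_simps)
    then have "U \<le> (9 * a - 5 * a^3) / 4"
      using zero_le_power[of a "Suc k"] a(1) by linarith
    ultimately show "U * (real k + 3) < V * (real k + 1)"
      using mult_right_mono[of U "(9 * a - 5 * a^3) / 4" "real k + 3"] by linarith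
  qed simp_all
  finally show ?thesis .
qed

lemma residual_moment_neg_odd:
  assumes a: "0 < a" "a^2 \<le> 1/5" and k: "4 \<le> k" "odd k"
  shows "residual_moment a k < 0"
proof -
  have m: "moment k = 0" "moment (Suc k) = 2 / (real k + 2)" "moment (Suc (Suc k)) = 0"
    using k(2) by (simp_all add: moment_eq)
  define U where "U = 1 - a ^ Suc k"
  define V where "V = 2 * qcoef a 1"
  have "residual_moment a k = U / (real k + 1) - V / (real k + 2)"
    unfolding residual_moment_def sum_lessThan_3 U_def V_def
    by (simp add: m add.commute mult.commute[of 2])
  also have "\<dots> < 0"
  proof (rule diff_divide_neg)
    have "5 \<le> k" using k by presburger
    have "U * (real k + 2) \<le> 1 * (real k + 2)"
      using a(1) by (intro mult_right_mono) (auto simp: U_def)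
    also have "\<dots> < 6/5 * (real k + 1)"
      using \<open>5 \<le> k\<close> by simp
    also have "\<dots> \<le> V * (real k + 1)"
      using a(2) by (intro mult_right_mono) (auto simp: V_def qcoef_def)
    finally show "U * (real k + 2) < V * (real k + 1)" .
  qed simp_all
  finally show ?thesis .
qed

lemma residual_moment_neg:
  assumes "0 < a" "a^2 \<le> 1/5" and "4 \<le> k"
  shows "residual_moment a k < 0"
  using residual_moment_neg_even[OF assms] residual_moment_neg_odd[OF assms] by blast

lemma residual_moment_nonpos:
  assumes "0 < a" "a^2 \<le> 1/5"
  shows "residual_moment a k \<le> 0"
proof -
  consider "k < 3" | "k = 3" | "4 \<le> k" by linarith
  then show ?thesis
  proof cases
    case 1
    then show ?thesis
      by (simp add: residual_moment_eq_0)
  next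
    case 2
    have "(1 - a^2) * (5 * a^2 - 1) \<le> 0"
      using assms(2) by (intro mult_nonneg_nonpos) auto
    then show ?thesis
      unfolding 2 residual_moment_3 by simp
  next
    case 3
    then show ?thesis
      using residual_moment_neg[OF assms] by fastforce
  qed
qed

lemma represents_qcoef:
  assumes "0 < a" "a^2 \<le> 1/5"
  shows "represents (qcoef a) (psum (qcoef a) 3)"
proof (rule represents_psum)
  show "\<forall>n. 0 \<le> qcoef a n"
    using qcoef_pos[OF assms] qcoef_vanishing[of a] by (metis le_less not_le)
qed (rule qcoef_vanishing)

lemma L2inner_psi_minus_qcoef_power:
  assumes "0 < a" "a^2 \<le> 1/5"
  shows "L2inner (\<lambda>t. psi a t - psum (qcoef a) 3 t) (\<lambda>t. t ^ k) = residual_moment a k"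
proof -
  have "a \<le> 1"
    using assms abs_square_le_1[of a] by simp
  then show ?thesis
    using L2inner_psi_minus_represents_power[OF _ _ represents_qcoef[OF assms] qcoef_vanishing]
      assms(1) by (simp add: residual_moment_def)
qed

lemma L2inner_psi_minus_qcoef_self:
  assumes "0 < a" "a^2 \<le> 1/5"
  shows "L2inner (\<lambda>t. psi a t - psum (qcoef a) 3 t) (psum (qcoef a) 3) = 0"
proof -
  have "L2inner (psum (qcoef a) 3) (\<lambda>t. psi a t - psum (qcoef a) 3 t)
      = (\<Sum>j<3. qcoef a j * residual_moment a j)"
    by (simp add: L2inner_psum_left inL2_diff inL2_psi inL2_psum L2inner_commute[of "\<lambda>t. t ^ _"]
        L2inner_psi_minus_qcoef_power[OF assms])
  also have "\<dots> = 0"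
    by (simp add: residual_moment_eq_0)
  finally show ?thesis
    by (simp add: L2inner_commute)
qed

lemma is_proj_Aplus_psi:
  assumes "0 < a" "a^2 \<le> 1/5"
  shows "is_proj_Aplus (psi a) (psum (qcoef a) 3)"
  using inL2_psi represents_qcoef[OF assms] L2inner_psi_minus_qcoef_self[OF assms]
    L2inner_psi_minus_qcoef_power[OF assms] residual_moment_nonpos[OF assms]
  by (intro is_proj_Aplus_if_variational) auto

lemma proj_psi_moments:
  assumes a: "0 < a" "a^2 \<le> 1/5" and proj: "is_proj_Aplus (psi a) P" and rep: "represents c P"
  shows "L2inner P (\<lambda>t. t ^ k) = L2inner (psum (qcoef a) 3) (\<lambda>t. t ^ k)"
proof -
  have "L2dist2 (psum (qcoef a) 3) P = 0"
    using inL2_psi represents_qcoef[OF a] L2inner_psi_minus_qcoef_power[OF a]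
      residual_moment_nonpos[OF a] L2inner_psi_minus_qcoef_self[OF a] proj rep
    by (intro proj_Aplus_unique_if_variational) auto
  then show ?thesis
    using L2dist2_eq_0_imp_L2inner_eq[OF inL2_psum represents_imp_inL2[OF rep] inL2_power] by simp
qed

lemma proj_psi_coeffs_vanishing:
  assumes a: "0 < a" "a^2 \<le> 1/5" and proj: "is_proj_Aplus (psi a) P" and rep: "represents c P"
    and "4 \<le> n"
  shows "c n = 0"
proof -
  have "L2inner (\<lambda>t. psi a t - P t) (\<lambda>t. t ^ n) = residual_moment a n"
    using proj_psi_moments[OF assms(1-4)] L2inner_psi_minus_qcoef_power[OF a]
      represents_imp_inL2[OF rep]
    by (simp add: L2inner_diff_left inL2_psi inL2_psum inL2_power)
  then have "\<not> 0 < c n"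
    using proj_Aplus_L2inner_power_eq_0[OF inL2_psi proj rep] residual_moment_neg[OF a assms(5)]
    by auto
  then show "c n = 0"
    using represents_nonneg[OF rep, of n] by simp
qed

lemma proj_psi_coeffs:
  assumes a: "0 < a" "a^2 \<le> 1/5" and proj: "is_proj_Aplus (psi a) P" and rep: "represents c P"
  shows "c = qcoef a"
proof
  have vanishing: "\<forall>n\<ge>4. c n = 0"
    using proj_psi_coeffs_vanishing[OF assms] by blast
  fix n
  show "c n = qcoef a n"
  proof (cases "n < 4")
    case True
    then show ?thesis
    proof (rule cubic_coeffs_eq_if_moments_eq[rotated])
      fix k :: nat
      show "(\<Sum>j<4. c j * moment (j + k)) = (\<Sum>j<4. qcoef a j * moment (j + k))"
        using proj_psi_moments[OF assms, of k] qcoef_vanishing[of a]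
          represents_L2inner_power_if_vanishing[OF rep vanishing]
          represents_L2inner_power_if_vanishing[OF represents_qcoef[OF a], of 4]
        by simp
    qed
  next
    case False
    then show ?thesis
      using vanishing qcoef_vanishing[of a] by simp
  qed
qed

lemma qcoef_support:
  assumes "0 < a" "a^2 \<le> 1/5"
  shows "{n. 0 < qcoef a n} = {0, 1, 2}"
proof -
  have "{n. 0 < qcoef a n} = {n. n < 3}"
    using qcoef_pos[OF assms] qcoef_vanishing[of a] by (auto simp: not_less[symmetric])
  also have "\<dots> = {0, 1, 2}"
    by (auto simp: numeral_3_eq_3 less_Suc_eq)
  finally show ?thesis .
qed

lemma range_if_quadratic_projection_moments:
  fixes a c0 c1 c2 :: real
  assumes "-1 \<le> a" "a < 1" "0 < c2"
    and "1 - a = 2 * c0 + 2/3 * c2" "(1 - a^2) / 2 = 2/3 * c1"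
    and "(1 - a^3) / 3 = 2/3 * c0 + 2/5 * c2" "(1 - a^4) / 4 \<le> 2/5 * c1"
  shows "0 < a \<and> a \<le> 1 / sqrt 5"
proof -
  have c2: "c2 = 15/8 * (a - a^3)" and c1: "c1 = 3/4 * (1 - a^2)"
    using assms(4-6) by argo+
  have "a^2 \<le> 1"
    using assms(1,2) by (simp add: abs_square_le_1)
  moreover have "0 < a * (1 - a^2)"
    using assms(3) c2 by (simp add: power2_eq_square power3_eq_cube algebra_simps)
  ultimately have "0 < a"
    by (simp add: zero_less_mult_iff)
  then have "a^2 < 1"
    using assms(2) by (simp add: power2_less_1_iff)
  have "(1 - a^2) * ((1 + a^2) / 4) = (1 - a^4) / 4"
    by (simp add: power4_eq_xxxx power2_eq_square algebra_simps)
  also have "\<dots> \<le> (1 - a^2) * (3/10)"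
    using assms(7) c1 by simp
  finally have "(1 - a^2) * ((1 + a^2) / 4) \<le> (1 - a^2) * (3/10)" .
  then have "(1 + a^2) / 4 \<le> 3/10"
    using \<open>a^2 < 1\<close> by (subst (asm) mult_le_cancel_left_pos) auto
  then have "a^2 \<le> 1/5"
    by simp
  then show ?thesis
    using \<open>0 < a\<close> le_inverse_sqrt_5_iff by blast
qed

lemma proj_psi_range_if_support:
  assumes a: "-1 \<le> a" "a < 1" and proj: "is_proj_Aplus (psi a) P" and rep: "represents c P"
    and support: "{n. 0 < c n} = {0, 1, 2}"
  shows "0 < a \<and> a \<le> 1 / sqrt 5"
proof -
  have pos: "0 < c 0" "0 < c 1" "0 < c 2"
    using support by (auto simp: set_eq_iff)
  have vanishing: "\<forall>n\<ge>3. c n = 0"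
  proof (intro allI impI)
    fix n :: nat assume "3 \<le> n"
    then have "n \<notin> {n. 0 < c n}" using support by auto
    then show "c n = 0" using represents_nonneg[OF rep, of n] by simp
  qed
  define G where "G k = (1 - a ^ Suc k) / Suc k - (\<Sum>j<3. c j * moment (j + k))" for k
  have G: "L2inner (\<lambda>t. psi a t - P t) (\<lambda>t. t ^ k) = G k" for k
    using L2inner_psi_minus_represents_power[OF _ _ rep vanishing] a by (simp add: G_def)
  have "G k = 0" if "0 < c k" for k
    using proj_Aplus_L2inner_power_eq_0[OF inL2_psi proj rep that] unfolding G .
  then have "G 0 = 0" "G 1 = 0" "G 2 = 0"
    using pos by auto
  moreover have "G 3 \<le> 0"
    using proj_Aplus_L2inner_power_nonpos[OF inL2_psi proj rep, of 3] unfolding G .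
  ultimately show ?thesis
    using a pos(3)
    by (intro range_if_quadratic_projection_moments[of a "c 2" "c 0" "c 1"])
       (simp_all add: G_def sum_lessThan_3 moment_def power2_eq_square)
qed

theorem proposition1p9:
  shows "(\<forall>a P c. -1 \<le> a \<and> a < 1 \<and> is_proj_Aplus (psi a) P \<and> represents c P \<longrightarrow>
            ({n. c n > 0} = {0, 1, 2} \<longleftrightarrow> 0 < a \<and> a \<le> 1 / sqrt 5))
       \<and> (\<forall>a. 0 < a \<and> a \<le> 1 / sqrt 5 \<longrightarrow>
            is_proj_Aplus (psi a)
              (\<lambda>t. (4 - 9*a + 5*a^3) / 8 + 3/4 * (1 - a^2) * t + 15/8 * (a - a^3) * t^2))"
proof (intro conjI allI impI)
  fix a P c
  assume "-1 \<le> a \<and> a < 1 \<and> is_proj_Aplus (psi a) P \<and> represents c P"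
  then have a: "-1 \<le> a" "a < 1" and proj: "is_proj_Aplus (psi a) P" and rep: "represents c P"
    by simp_all
  show "{n. c n > 0} = {0, 1, 2} \<longleftrightarrow> 0 < a \<and> a \<le> 1 / sqrt 5"
  proof
    assume "{n. c n > 0} = {0, 1, 2}"
    then show "0 < a \<and> a \<le> 1 / sqrt 5"
      by (rule proj_psi_range_if_support[OF a proj rep])
  next
    assume "0 < a \<and> a \<le> 1 / sqrt 5"
    then have a0: "0 < a" and a2: "a^2 \<le> 1/5"
      using le_inverse_sqrt_5_iff[of a] by simp_all
    have "c = qcoef a"
      by (rule proj_psi_coeffs[OF a0 a2 proj rep])
    then show "{n. c n > 0} = {0, 1, 2}"
      using qcoef_support[OF a0 a2] by simp
  qed
next
  fix a :: real
  assume "0 < a \<and> a \<le> 1 / sqrt 5"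
  then have a0: "0 < a" and a2: "a^2 \<le> 1/5"
    using le_inverse_sqrt_5_iff[of a] by simp_all
  show "is_proj_Aplus (psi a)
      (\<lambda>t. (4 - 9*a + 5*a^3) / 8 + 3/4 * (1 - a^2) * t + 15/8 * (a - a^3) * t^2)"
    using is_proj_Aplus_psi[OF a0 a2] by (simp only: psum_qcoef)
qed

end
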